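(* (1) If $t_1 : X_1 \to X'_1$ with proof label $\theta_1$ and $t_2 : X_2\to X'_2$ with proof label $\theta_2$ are connected CCSK$^{\mathrm P}$ transitions (each forward or backward), then $\theta_1\frown\theta_2$. (2) If $\theta_1\frown\theta_2$, then there exist CCSK$^{\mathrm P}$ transitions $t_1: X_1\to X'_1$ with proof label $\theta_1$ and $t_2: X_2\to X'_2$ with proof label $\theta_2$ (each forward or backward) such that $t_1$ and $t_2$ are connected.
   Context: Names $\mathsf N$ with a bijection $\overline{\cdot}$ onto disjoint co-names $\overline{\mathsf N}$; labels $\mathsf L=\mathsf N\cup\overline{\mathsf N}\cup\{\tau\}$ ($\alpha$ ranges over $\mathsf L$, $\lambda$ over $\mathsf L\setminus\{\tau\}$, $\overline\tau=\tau$); $\mathsf K$ a denumerable set of keys. CCSK processes: $X,Y::=\mathbf 0\mid\alpha.X\mid X\backslash\lambda\mid X+Y\mid X|Y\mid\alpha[k].X$; $\mathrm{keys}(X)$ is the set of keys occurring in $X$; $X$ is standard if $\mathrm{keys}(X)=\emptyset$. Directions $D\in\{\mathrm L,\mathrm R\}$, $\bar{\mathrm L}=\mathrm R$, $\bar{\mathrm R}=\mathrm L$. Proof keyed labels: $\theta::=\upsilon\,\alpha[k]\mid\upsilon\langle\upsilon_1\lambda[k],\upsilon_2\overline\lambda[k]\rangle$ with $\upsilon,\upsilon_1,\upsilon_2\in\{|_{\mathrm L},|_{\mathrm R},+_{\mathrm L},+_{\mathrm R}\}^*$; $\ell(\upsilon\alpha[k])=\alpha$, $\ell(\upsilon\langle\cdots\rangle)=\tau$,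 $\mathrm{key}(\theta)=k$. Forward transitions $X\xrightarrow{\theta}X'$ of CCSK$^{\mathrm P}$ form the least relation closed under: (act) $\alpha.X\xrightarrow{\alpha[k]}\alpha[k].X$ for any $k$, if $\mathrm{keys}(X)=\emptyset$; (pre) if $X\xrightarrow\theta X'$ and $\mathrm{key}(\theta)\ne k$ then $\alpha[k].X\xrightarrow\theta\alpha[k].X'$; (res) if $X\xrightarrow\theta X'$ and $\ell(\theta)\notin\{\lambda,\overline\lambda\}$ then $X\backslash\lambda\xrightarrow\theta X'\backslash\lambda$; (par) if $X\xrightarrow\theta X'$ and $\mathrm{key}(\theta)\notin\mathrm{keys}(Y)$ then $X|Y\xrightarrow{|_{\mathrm L}\theta}X'|Y$ and $Y|X\xrightarrow{|_{\mathrm R}\theta}Y|X'$; (syn) if $X\xrightarrow{\upsilon_1\lambda[k]}X'$ and $Y\xrightarrow{\upsilon_2\overline\lambda[k]}Y'$ then $X|Y\xrightarrow{\langle\upsilon_1\lambda[k],\upsilon_2\overline\lambda[k]\rangle}X'|Y'$; (sum) if $X\xrightarrow\theta X'$ and $\mathrm{keys}(Y)=\emptyset$ then $X+Y\xrightarrow{+_{\mathrm L}\theta}X'+Y$ and $Y+X\xrightarrow{+_{\mathrm R}\theta}Y+X'$. Backward transitions are the converse: a backward transition from $Y$ to $X$ with label $\theta$ exists iff $X\xrightarrow\theta Y$. A transition has a source, target and proof label; a path is a finite sequence of (forward or backward) transitions each of whose target is the source of the next. A process is reachable if there is a path from a standard process to it; only reachable processes are considered. Transitions $t_1,t_2$ are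 connected if there is a path from the source of one to the target of the other. Connectivity $\frown$ on proof keyed labels is the least relation closed under (a label "is a prefix" if it has the form $\beta[k']$; $\theta_{\mathrm L},\theta_{\mathrm R}$ are the components of a synchronisation label): (A1) $\alpha[k]\frown\theta$; (A2) $\theta\frown\alpha[k]$ if $\theta$ is not a prefix; (P1) $|_D\theta\frown|_D\theta'$ if $\theta\frown\theta'$; (P2) $|_D\theta\frown|_{\bar D}\theta'$; (C1) $+_D\theta\frown+_D\theta'$ if $\theta\frown\theta'$; (C2) $+_D\theta\frown+_{\bar D}\theta'$; (S1) $|_D\theta\frown\langle\theta_{\mathrm L},\theta_{\mathrm R}\rangle$ if $\theta\frown\theta_D$; (S2) $\langle\theta_{\mathrm L},\theta_{\mathrm R}\rangle\frown|_D\theta$ if $\theta_D\frown\theta$; (S3) $\langle\theta_1,\theta_2\rangle\frown\langle\theta'_1,\theta'_2\rangle$ if $\theta_1\frown\theta'_1$ and $\theta_2\frown\theta'_2$. *)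

theory Defs
  imports Main
begin

text \<open>Names are a type parameter 'n; co-names are a disjoint copy. Keys are nat (denumerable).\<close>

datatype 'n act = Nm 'n | CoNm 'n
datatype 'n lab = Vis "'n act" | Tau

type_synonym key = nat

fun coact :: "'n act \<Rightarrow> 'n act" where
  "coact (Nm a) = CoNm a"
| "coact (CoNm a) = Nm a"

datatype 'n proc =
    Zero
  | Pre "'n lab" "'n proc"
  | Res "'n proc" "'n act"
  | Sum "'n proc" "'n proc"
  | Par "'n proc" "'n proc"
  | KPre "'n lab" key "'n proc"

fun keys :: "'n proc \<Rightarrow> key set" where
  "keys Zero = {}"
| "keys (Pre a X) = keys X"
| "keys (Res X l) = keys X"
| "keys (Sum X Y) = keys X \<union> keys Y"
| "keys (Par X Y) = keys X \<union> keys Y"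
| "keys (KPre a k X) = insert k (keys X)"

definition standard :: "'n proc \<Rightarrow> bool" where
  "standard X \<longleftrightarrow> keys X = {}"

datatype dir = DL | DR

fun flip :: "dir \<Rightarrow> dir" where
  "flip DL = DR" | "flip DR = DL"

datatype op = ParOp dir | SumOp dir

text \<open>Proof keyed labels, following the grammar exactly:
  PAct \<upsilon> \<alpha> k  is  \<upsilon>\<alpha>[k];
  PSyn \<upsilon> \<upsilon>1 \<lambda> \<upsilon>2 k  is  \<upsilon>\<langle>\<upsilon>1\<lambda>[k], \<upsilon>2 co(\<lambda>)[k]\<rangle>.\<close>
datatype 'n pkl =
    PAct "op list" "'n lab" key
  | PSyn "op list" "op list" "'n act" "op list" key

fun pre :: "op \<Rightarrow> 'n pkl \<Rightarrow> 'n pkl" where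
  "pre o' (PAct u a k) = PAct (o' # u) a k"
| "pre o' (PSyn u u1 l u2 k) = PSyn (o' # u) u1 l u2 k"

fun lbl :: "'n pkl \<Rightarrow> 'n lab" where
  "lbl (PAct u a k) = a"
| "lbl (PSyn u u1 l u2 k) = Tau"

fun pkey :: "'n pkl \<Rightarrow> key" where
  "pkey (PAct u a k) = k"
| "pkey (PSyn u u1 l u2 k) = k"

fun is_prefix :: "'n pkl \<Rightarrow> bool" where
  "is_prefix (PAct u a k) = (u = [])"
| "is_prefix (PSyn u u1 l u2 k) = False"

text \<open>Components of a (top-level) synchronisation label \<langle>\<theta>_L, \<theta>_R\<rangle>.\<close>
fun comp :: "dir \<Rightarrow> op list \<Rightarrow> 'n act \<Rightarrow> op list \<Rightarrow> key \<Rightarrow> 'n pkl" where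
  "comp DL u1 l u2 k = PAct u1 (Vis l) k"
| "comp DR u1 l u2 k = PAct u2 (Vis (coact l)) k"

inductive fwd :: "'n proc \<Rightarrow> 'n pkl \<Rightarrow> 'n proc \<Rightarrow> bool" where
  act: "keys X = {} \<Longrightarrow> fwd (Pre a X) (PAct [] a k) (KPre a k X)"
| pre: "fwd X th X' \<Longrightarrow> pkey th \<noteq> k \<Longrightarrow> fwd (KPre a k X) th (KPre a k X')"
| res: "fwd X th X' \<Longrightarrow> lbl th \<notin> {Vis l, Vis (coact l)} \<Longrightarrow> fwd (Res X l) th (Res X' l)"
| parL: "fwd X th X' \<Longrightarrow> pkey th \<notin> keys Y \<Longrightarrow> fwd (Par X Y) (pre (ParOp DL) th) (Par X' Y)"
| parR: "fwd X th X' \<Longrightarrow> pkey th \<notin> keys Y \<Longrightarrow> fwd (Par Y X) (pre (ParOp DR) th) (Par Y X')"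
| syn: "fwd X (PAct u1 (Vis l) k) X' \<Longrightarrow> fwd Y (PAct u2 (Vis (coact l)) k) Y' \<Longrightarrow>
        fwd (Par X Y) (PSyn [] u1 l u2 k) (Par X' Y')"
| sumL: "fwd X th X' \<Longrightarrow> keys Y = {} \<Longrightarrow> fwd (Sum X Y) (pre (SumOp DL) th) (Sum X' Y)"
| sumR: "fwd X th X' \<Longrightarrow> keys Y = {} \<Longrightarrow> fwd (Sum Y X) (pre (SumOp DR) th) (Sum Y X')"

definition ptrans :: "'n proc \<Rightarrow> 'n pkl \<Rightarrow> 'n proc \<Rightarrow> bool" where
  "ptrans X th Y \<longleftrightarrow> fwd X th Y \<or> fwd Y th X"

definition path :: "'n proc \<Rightarrow> 'n proc \<Rightarrow> bool" where
  "path X Y \<longleftrightarrow> (\<lambda>A B. \<exists>th. ptrans A th B)\<^sup>*\<^sup>* X Y"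

definition reachable :: "'n proc \<Rightarrow> bool" where
  "reachable X \<longleftrightarrow> (\<exists>S. standard S \<and> path S X)"

definition connected :: "'n proc \<Rightarrow> 'n proc \<Rightarrow> 'n proc \<Rightarrow> 'n proc \<Rightarrow> bool" where
  "connected X1 X1' X2 X2' \<longleftrightarrow> path X1 X2' \<or> path X2 X1'"

inductive conn :: "'n pkl \<Rightarrow> 'n pkl \<Rightarrow> bool" where
  A1: "conn (PAct [] a k) th"
| A2: "\<not> is_prefix th \<Longrightarrow> conn th (PAct [] a k)"
| P1: "conn th th' \<Longrightarrow> conn (pre (ParOp D) th) (pre (ParOp D) th')"
| P2: "conn (pre (ParOp D) th) (pre (ParOp (flip D)) th')"
| C1: "conn th th' \<Longrightarrow> conn (pre (SumOp D) th) (pre (SumOp D) th')"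
| C2: "conn (pre (SumOp D) th) (pre (SumOp (flip D)) th')"
| S1: "conn th (comp D u1 l u2 k) \<Longrightarrow> conn (pre (ParOp D) th) (PSyn [] u1 l u2 k)"
| S2: "conn (comp D u1 l u2 k) th \<Longrightarrow> conn (PSyn [] u1 l u2 k) (pre (ParOp D) th)"
| S3: "conn (PAct u1 (Vis l) k) (PAct u1' (Vis l') k') \<Longrightarrow>
       conn (PAct u2 (Vis (coact l)) k) (PAct u2' (Vis (coact l')) k') \<Longrightarrow>
       conn (PSyn [] u1 l u2 k) (PSyn [] u1' l' u2' k')"

end

theory Submission
  imports Defs
begin

text \<open>
  (1) Transitions only add or remove keys, so they preserve the \<open>origin\<close> of a process,
  obtained by erasing all keys; connected transitions therefore start from processes with
  the same origin. Induction on that common origin shows that any two labels of transitions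
  from processes with the same origin are connected.

  (2) By induction on \<open>conn\<close>, for every finite set \<open>F\<close> of keys there are a standard process
  \<open>S\<close> and forward computations \<open>S \<rightarrow>* X\<^sub>1\<close>, \<open>S \<rightarrow>* X\<^sub>2\<close> with keys outside \<open>F\<close> such that
  \<open>X\<^sub>1\<close> performs \<open>\<theta>\<^sub>1\<close> and \<open>X\<^sub>2\<close> performs \<open>\<theta>\<^sub>2\<close>; then \<open>X\<^sub>1 \<leftarrow>* S \<rightarrow>* X\<^sub>2 \<rightarrow> X\<^sub>2'\<close> connects
  the two transitions. Avoiding \<open>F\<close> is what lets two such witnesses run side by side in
  parallel for rule \<open>S3\<close>, where both components must synchronise.
\<close>

fun origin :: "'n proc \<Rightarrow> 'n proc" where
  "origin Zero = Zero"
| "origin (Pre a X) = Pre a (origin X)"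
| "origin (Res X l) = Res (origin X) l"
| "origin (Sum X Y) = Sum (origin X) (origin Y)"
| "origin (Par X Y) = Par (origin X) (origin Y)"
| "origin (KPre a k X) = Pre a (origin X)"

lemma fwd_origin: "fwd X th Y \<Longrightarrow> origin X = origin Y"
  by (induction rule: fwd.induct) auto

lemma ptrans_origin: "ptrans X th Y \<Longrightarrow> origin X = origin Y"
  unfolding ptrans_def using fwd_origin by metis

lemma path_origin: "path X Y \<Longrightarrow> origin X = origin Y"
  unfolding path_def by (induction rule: rtranclp_induct) (auto dest: ptrans_origin)

definition has_trans :: "'n proc \<Rightarrow> 'n pkl \<Rightarrow> bool" where
  "has_trans X th \<longleftrightarrow> (\<exists>Y. ptrans X th Y)"

lemma not_has_trans_Zero: "\<not> has_trans Zero th"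
  by (auto simp: has_trans_def ptrans_def elim: fwd.cases)

lemma has_trans_Pre: "has_trans (Pre a X) th \<Longrightarrow> \<exists>k. th = PAct [] a k"
  by (auto simp: has_trans_def ptrans_def elim: fwd.cases)

lemma has_trans_KPre: "has_trans (KPre a k X) th \<Longrightarrow> has_trans X th \<or> th = PAct [] a k"
  by (auto simp: has_trans_def ptrans_def elim: fwd.cases)

lemma has_trans_Res: "has_trans (Res X l) th \<Longrightarrow> has_trans X th"
  by (auto simp: has_trans_def ptrans_def elim: fwd.cases)

lemma has_trans_Sum:
  "has_trans (Sum X Y) th \<Longrightarrow>
     (\<exists>t. th = pre (SumOp DL) t \<and> has_trans X t) \<or> (\<exists>t. th = pre (SumOp DR) t \<and> has_trans Y t)"
  unfolding has_trans_def ptrans_def by (erule exE, erule disjE; erule fwd.cases; blast)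

lemma has_trans_Par:
  "has_trans (Par X Y) th \<Longrightarrow>
     (\<exists>t. th = pre (ParOp DL) t \<and> has_trans X t) \<or> (\<exists>t. th = pre (ParOp DR) t \<and> has_trans Y t) \<or>
     (\<exists>u1 l u2 k. th = PSyn [] u1 l u2 k \<and>
        has_trans X (PAct u1 (Vis l) k) \<and> has_trans Y (PAct u2 (Vis (coact l)) k))"
  unfolding has_trans_def ptrans_def by (erule exE, erule disjE; erule fwd.cases; blast)

lemma conn_prefix_right: "conn th (PAct [] a k)"
proof (cases "is_prefix th")
  case True
  then obtain b k' where "th = PAct [] b k'" by (cases th) auto
  then show ?thesis by (simp add: conn.A1)
qed (rule conn.A2)

lemma conn_if_same_origin:
  "origin X1 = origin X2 \<Longrightarrow> has_trans X1 th1 \<Longrightarrow> has_trans X2 th2 \<Longrightarrow> conn th1 th2"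
proof (induction X1 arbitrary: X2 th1 th2)
  case Zero
  then show ?case using not_has_trans_Zero by blast
next
  case (Pre a X)
  then show ?case using has_trans_Pre conn.A1 by blast
next
  case (Res X l)
  then obtain X' where "X2 = Res X' l" "origin X = origin X'" by (cases X2) auto
  with Res show ?case using has_trans_Res by blast
next
  case (KPre a k X)
  then obtain X' where X': "origin X = origin X'" "X2 = Pre a X' \<or> (\<exists>k'. X2 = KPre a k' X')"
    by (cases X2) auto
  show ?case
  proof (cases "th1 = PAct [] a k")
    case False
    with KPre have "has_trans X th1" using has_trans_KPre by blast
    with X' KPre show ?thesis using has_trans_Pre has_trans_KPre conn_prefix_right by metis
  qed (simp add: conn.A1)
next
  case (Sum X Y)
  then obtain X' Y' where X2: "X2 = Sum X' Y'" "origin X = origin X'" "origin Y = origin Y'"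
    by (cases X2) auto
  from has_trans_Sum[OF Sum.prems(2)] has_trans_Sum[OF Sum.prems(3)[unfolded X2(1)]] show ?case
    using Sum.IH X2 conn.C1 conn.C2[of DL] conn.C2[of DR] by fastforce
next
  case (Par X Y)
  then obtain X' Y' where X2: "X2 = Par X' Y'" "origin X = origin X'" "origin Y = origin Y'"
    by (cases X2) auto
  from has_trans_Par[OF Par.prems(2)] has_trans_Par[OF Par.prems(3)[unfolded X2(1)]] show ?case
  proof (elim disjE exE conjE)
  qed (use Par.IH X2 in \<open>auto intro: conn.P1 conn.P2[of DL, simplified] conn.P2[of DR, simplified]
        conn.S1[of _ DL, simplified] conn.S1[of _ DR, simplified]
        conn.S2[of DL, simplified] conn.S2[of DR, simplified] conn.S3\<close>)
qed

lemma conn_if_connected: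
  assumes "ptrans X1 th1 X1'" "ptrans X2 th2 X2'" "connected X1 X1' X2 X2'"
  shows "conn th1 th2"
proof -
  have "origin X1 = origin X2"
    using assms path_origin ptrans_origin unfolding connected_def by metis
  moreover have "has_trans X1 th1" "has_trans X2 th2"
    using assms(1,2) unfolding has_trans_def by blast+
  ultimately show ?thesis by (rule conn_if_same_origin)
qed

lemma pkey_pre [simp]: "pkey (pre o' th) = pkey th"
  by (cases th) auto

lemma finite_keys: "finite (keys X)"
  by (induction X) auto

lemma fwd_keys: "fwd X th Y \<Longrightarrow> keys Y = insert (pkey th) (keys X)"
  by (induction rule: fwd.induct) auto

fun plug :: "op \<Rightarrow> 'n proc \<Rightarrow> 'n proc \<Rightarrow> 'n proc" where
  "plug (ParOp DL) X Z = Par X Z"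
| "plug (ParOp DR) X Z = Par Z X"
| "plug (SumOp DL) X Z = Sum X Z"
| "plug (SumOp DR) X Z = Sum Z X"

lemma keys_plug [simp]: "keys (plug o' X Z) = keys X \<union> keys Z"
  by (cases "(o', X, Z)" rule: plug.cases) auto

lemma plug_flip: "c \<in> {ParOp, SumOp} \<Longrightarrow> plug (c (flip D)) X Z = plug (c D) Z X"
  by (cases D) auto

lemma fwd_plug: "fwd X th X' \<Longrightarrow> keys Z = {} \<Longrightarrow> fwd (plug o' X Z) (pre o' th) (plug o' X' Z)"
  by (cases "(o', X, Z)" rule: plug.cases) (auto intro: fwd.intros)

lemma fwd_plug_syn:
  "fwd X (comp D u1 l u2 k) X' \<Longrightarrow> fwd Y (comp (flip D) u1 l u2 k) Y' \<Longrightarrow>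
   fwd (plug (ParOp D) X Y) (PSyn [] u1 l u2 k) (plug (ParOp D) X' Y')"
  by (cases D) (auto intro: fwd.syn)

fun ctx :: "op list \<Rightarrow> 'n proc \<Rightarrow> 'n proc" where
  "ctx [] X = X"
| "ctx (o' # u) X = plug o' (ctx u X) Zero"

lemma keys_ctx [simp]: "keys (ctx u X) = keys X"
  by (induction u) auto

lemma fwd_ctx: "fwd X th X' \<Longrightarrow> fwd (ctx u X) (foldr pre u th) (ctx u X')"
  by (induction u) (auto intro: fwd_plug)

lemma fwd_ctx_act: "fwd (ctx u (Pre a Zero)) (PAct u a k) (ctx u (KPre a k Zero))"
proof -
  have "fwd (ctx u (Pre a Zero)) (foldr pre u (PAct [] a k)) (ctx u (KPre a k Zero))"
    by (intro fwd_ctx fwd.act) simp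
  moreover have "foldr pre u (PAct [] a k) = PAct u a k" by (induction u) auto
  ultimately show ?thesis by simp
qed

lemma ex_standard_fwd: "\<exists>P P'. keys P = {} \<and> fwd P th P'"
proof (cases th)
  case (PAct u a k)
  have "keys (ctx u (Pre a Zero)) = {}" by simp
  with PAct show ?thesis using fwd_ctx_act by blast
next
  case (PSyn u u1 l u2 k)
  let ?P = "Par (ctx u1 (Pre (Vis l) Zero)) (ctx u2 (Pre (Vis (coact l)) Zero))"
  obtain P' where "fwd ?P (PSyn [] u1 l u2 k) P'"
    using fwd.syn[OF fwd_ctx_act fwd_ctx_act] by blast
  moreover have "foldr pre u (PSyn [] u1 l u2 k) = th"
    using PSyn by (induction u arbitrary: th) auto
  ultimately have "fwd (ctx u ?P) th (ctx u P')" using fwd_ctx by metis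
  moreover have "keys (ctx u ?P) = {}" by simp
  ultimately show ?thesis by blast
qed

definition fwd_path :: "'n proc \<Rightarrow> 'n proc \<Rightarrow> bool" where
  "fwd_path = (\<lambda>X Y. \<exists>th. fwd X th Y)\<^sup>*\<^sup>*"

lemma fwd_path_trans: "fwd_path X Y \<Longrightarrow> fwd_path Y Z \<Longrightarrow> fwd_path X Z"
  unfolding fwd_path_def by (rule rtranclp_trans)

lemma fwd_path_plug: "fwd_path X Y \<Longrightarrow> keys Z = {} \<Longrightarrow> fwd_path (plug o' X Z) (plug o' Y Z)"
  unfolding fwd_path_def
  by (induction rule: rtranclp_induct) (auto intro: rtranclp.rtrancl_into_rtrancl fwd_plug)

lemma fwd_path_ParR:
  "fwd_path X Y \<Longrightarrow> keys Y \<inter> keys Z = {} \<Longrightarrow> fwd_path (Par Z X) (Par Z Y)"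
  unfolding fwd_path_def
proof (induction rule: rtranclp_induct)
  case (step Y W)
  then obtain th where th: "fwd Y th W" by blast
  with step.prems have "keys Y \<inter> keys Z = {}" "pkey th \<notin> keys Z"
    by (auto simp: fwd_keys)
  with step.IH th show ?case by (auto intro: rtranclp.rtrancl_into_rtrancl fwd.parR)
qed simp

definition realisable_avoiding :: "key set \<Rightarrow> 'n pkl \<Rightarrow> 'n pkl \<Rightarrow> bool" where
  "realisable_avoiding F th1 th2 \<longleftrightarrow> (\<exists>S X1 X1' X2 X2'. keys S = {} \<and>
     fwd_path S X1 \<and> fwd X1 th1 X1' \<and> keys X1 \<inter> F = {} \<and>
     fwd_path S X2 \<and> fwd X2 th2 X2' \<and> keys X2 \<inter> F = {})"

lemma realisable_avoidingI:
  "keys S = {} \<Longrightarrow> fwd_path S X1 \<Longrightarrow> fwd X1 th1 X1' \<Longrightarrow> keys X1 \<inter> F = {} \<Longrightarrow>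
   fwd_path S X2 \<Longrightarrow> fwd X2 th2 X2' \<Longrightarrow> keys X2 \<inter> F = {} \<Longrightarrow> realisable_avoiding F th1 th2"
  unfolding realisable_avoiding_def by blast

lemma realisable_avoiding_sym: "realisable_avoiding F th1 th2 \<Longrightarrow> realisable_avoiding F th2 th1"
  unfolding realisable_avoiding_def by blast

lemma realisable_avoiding_prefix:
  assumes "finite F"
  shows "realisable_avoiding F (PAct [] a k) th"
proof -
  obtain P P' where P: "keys P = {}" "fwd P th P'" using ex_standard_fwd by blast
  obtain k' where k': "k' \<notin> insert (pkey th) F" using assms ex_new_if_finite by blast
  have "fwd_path (Pre a P) (KPre a k' P)"
    unfolding fwd_path_def using fwd.act[OF P(1)] by blast
  moreover have "fwd (KPre a k' P) th (KPre a k' P')" using P(2) k' by (intro fwd.pre) auto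
  moreover have "fwd (Pre a P) (PAct [] a k) (KPre a k P)" using P(1) by (rule fwd.act)
  ultimately show ?thesis using P(1) k'
    by (intro realisable_avoidingI[of "Pre a P"]) (auto simp: fwd_path_def)
qed

lemma realisable_avoiding_pre:
  assumes "realisable_avoiding F th1 th2"
  shows "realisable_avoiding F (pre o' th1) (pre o' th2)"
proof -
  from assms obtain S X1 X1' X2 X2' where "keys S = {}"
    "fwd_path S X1" "fwd X1 th1 X1'" "keys X1 \<inter> F = {}"
    "fwd_path S X2" "fwd X2 th2 X2'" "keys X2 \<inter> F = {}"
    unfolding realisable_avoiding_def by blast
  then show ?thesis
    by (intro realisable_avoidingI[where S = "plug o' S Zero"
          and ?X1.0 = "plug o' X1 Zero" and X1' = "plug o' X1' Zero"
          and ?X2.0 = "plug o' X2 Zero" and X2' = "plug o' X2' Zero"] fwd_path_plug fwd_plug) auto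
qed

lemma realisable_avoiding_flip:
  assumes "c \<in> {ParOp, SumOp}"
  shows "realisable_avoiding F (pre (c D) th1) (pre (c (flip D)) th2)"
proof -
  obtain P P' where P: "keys P = {}" "fwd P th1 P'" using ex_standard_fwd by blast
  obtain Q Q' where Q: "keys Q = {}" "fwd Q th2 Q'" using ex_standard_fwd by blast
  have "fwd (plug (c D) P Q) (pre (c D) th1) (plug (c D) P' Q)"
    using P(2) Q(1) by (rule fwd_plug)
  moreover have "fwd (plug (c D) P Q) (pre (c (flip D)) th2) (plug (c D) P Q')"
    using fwd_plug[OF Q(2) P(1), of "c (flip D)"] unfolding plug_flip[OF assms] .
  ultimately show ?thesis using P(1) Q(1)
    by (intro realisable_avoidingI[of "plug (c D) P Q"]) (auto simp: fwd_path_def)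
qed

lemma realisable_avoiding_syn:
  assumes "realisable_avoiding F th (comp D u1 l u2 k)"
  shows "realisable_avoiding F (pre (ParOp D) th) (PSyn [] u1 l u2 k)"
proof -
  from assms obtain S X1 X1' X2 X2' where "keys S = {}"
    "fwd_path S X1" "fwd X1 th X1'" "keys X1 \<inter> F = {}"
    "fwd_path S X2" "fwd X2 (comp D u1 l u2 k) X2'" "keys X2 \<inter> F = {}"
    unfolding realisable_avoiding_def by blast
  moreover obtain R R' where "keys R = {}" "fwd R (comp (flip D) u1 l u2 k) R'"
    using ex_standard_fwd by blast
  ultimately show ?thesis
    by (intro realisable_avoidingI[where S = "plug (ParOp D) S R" and ?X1.0 = "plug (ParOp D) X1 R"
          and X1' = "plug (ParOp D) X1' R" and ?X2.0 = "plug (ParOp D) X2 R"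
          and X2' = "plug (ParOp D) X2' R'"] fwd_path_plug fwd_plug fwd_plug_syn) auto
qed

lemma realisable_avoiding_syn_syn:
  assumes "finite F"
    and "realisable_avoiding F (PAct u1 (Vis l) k) (PAct u1' (Vis l') k')"
    and "\<And>G. finite G \<Longrightarrow>
           realisable_avoiding G (PAct u2 (Vis (coact l)) k) (PAct u2' (Vis (coact l')) k')"
  shows "realisable_avoiding F (PSyn [] u1 l u2 k) (PSyn [] u1' l' u2' k')"
proof -
  obtain S X1 X1' X2 X2' where S: "keys S = {}"
    "fwd_path S X1" "fwd X1 (PAct u1 (Vis l) k) X1'" "keys X1 \<inter> F = {}"
    "fwd_path S X2" "fwd X2 (PAct u1' (Vis l') k') X2'" "keys X2 \<inter> F = {}"
    using assms(2) unfolding realisable_avoiding_def by blast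
  define G where "G = F \<union> keys X1 \<union> keys X2"
  have "finite G" unfolding G_def using assms(1) finite_keys by blast
  obtain T Y1 Y1' Y2 Y2' where T: "keys T = {}"
    "fwd_path T Y1" "fwd Y1 (PAct u2 (Vis (coact l)) k) Y1'" "keys Y1 \<inter> G = {}"
    "fwd_path T Y2" "fwd Y2 (PAct u2' (Vis (coact l')) k') Y2'" "keys Y2 \<inter> G = {}"
    using assms(3)[OF \<open>finite G\<close>] unfolding realisable_avoiding_def by blast
  \<comment> \<open>the right component runs after the left one, which is possible as its keys avoid \<open>G\<close>\<close>
  have "fwd_path (Par S T) (Par X1 T)" "fwd_path (Par S T) (Par X2 T)"
    using fwd_path_plug[OF S(2) T(1), of "ParOp DL"] fwd_path_plug[OF S(5) T(1), of "ParOp DL"]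
    by simp_all
  moreover have "fwd_path (Par X1 T) (Par X1 Y1)" "fwd_path (Par X2 T) (Par X2 Y2)"
    using fwd_path_ParR[OF T(2), of X1] fwd_path_ParR[OF T(5), of X2] T(4,7)
    unfolding G_def by blast+
  ultimately have "fwd_path (Par S T) (Par X1 Y1)" "fwd_path (Par S T) (Par X2 Y2)"
    by (blast intro: fwd_path_trans)+
  moreover have "keys (Par S T) = {}" "keys (Par X1 Y1) \<inter> F = {}" "keys (Par X2 Y2) \<inter> F = {}"
    using S(1,4,7) T(1,4,7) unfolding G_def by auto
  ultimately show ?thesis
    using fwd.syn[OF S(3) T(3)] fwd.syn[OF S(6) T(6)] unfolding realisable_avoiding_def by blast
qed

lemma realisable_avoiding_if_conn: "conn th1 th2 \<Longrightarrow> finite F \<Longrightarrow> realisable_avoiding F th1 th2"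
proof (induction arbitrary: F rule: conn.induct)
  case (A1 a k th)
  then show ?case by (rule realisable_avoiding_prefix)
next
  case (A2 th a k)
  from \<open>finite F\<close> show ?case by (rule realisable_avoiding_sym[OF realisable_avoiding_prefix])
next
  case (P1 th th' D)
  then show ?case by (intro realisable_avoiding_pre) simp
next
  case (P2 D th th')
  then show ?case by (intro realisable_avoiding_flip) simp
next
  case (C1 th th' D)
  then show ?case by (intro realisable_avoiding_pre) simp
next
  case (C2 D th th')
  then show ?case by (intro realisable_avoiding_flip) simp
next
  case (S1 th D u1 l u2 k)
  then show ?case by (intro realisable_avoiding_syn) simp
next
  case (S2 D u1 l u2 k th)
  then show ?case
    by (simp add: realisable_avoiding_sym realisable_avoiding_syn)
next
  case (S3 u1 l k u1' l' k' u2 u2')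
  then show ?case by (intro realisable_avoiding_syn_syn) simp_all
qed

lemma fwd_path_imp_path: "fwd_path X Y \<Longrightarrow> path X Y"
  unfolding fwd_path_def path_def ptrans_def by (rule rtranclp_mono[THEN predicate2D]) auto

lemma ptrans_sym: "ptrans X th Y \<Longrightarrow> ptrans Y th X"
  unfolding ptrans_def by blast

lemma path_sym: "path X Y \<Longrightarrow> path Y X"
  unfolding path_def
proof (induction rule: rtranclp_induct)
  case (step Y Z)
  then show ?case by (blast intro: converse_rtranclp_into_rtranclp ptrans_sym)
qed simp

lemma connected_if_realisable_avoiding:
  assumes "realisable_avoiding F th1 th2"
  shows "\<exists>X1 X1' X2 X2'. reachable X1 \<and> reachable X2 \<and>
           ptrans X1 th1 X1' \<and> ptrans X2 th2 X2' \<and> connected X1 X1' X2 X2'"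
proof -
  from assms obtain S X1 X1' X2 X2' where S: "keys S = {}"
    "path S X1" "fwd X1 th1 X1'" "path S X2" "fwd X2 th2 X2'"
    unfolding realisable_avoiding_def using fwd_path_imp_path by blast
  then have "reachable X1" "reachable X2" "ptrans X1 th1 X1'" "ptrans X2 th2 X2'"
    by (auto simp: reachable_def standard_def ptrans_def)
  moreover have "path X1 X2'"
    using path_sym[OF S(2)] S(4) \<open>ptrans X2 th2 X2'\<close>
    unfolding path_def by (blast intro: rtranclp.rtrancl_into_rtrancl rtranclp_trans)
  ultimately show ?thesis unfolding connected_def by blast
qed

theorem proposition4p4:
  fixes th1 th2 :: "'n pkl"
  shows "(\<forall>X1 X1' X2 X2'.
            reachable X1 \<and> reachable X2 \<and> ptrans X1 th1 X1' \<and> ptrans X2 th2 X2' \<and>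
            connected X1 X1' X2 X2' \<longrightarrow> conn th1 th2)
       \<and> (conn th1 th2 \<longrightarrow>
            (\<exists>X1 X1' X2 X2'. reachable X1 \<and> reachable X2 \<and>
               ptrans X1 th1 X1' \<and> ptrans X2 th2 X2' \<and> connected X1 X1' X2 X2'))"
  using conn_if_connected realisable_avoiding_if_conn[of th1 th2 "{}"]
    connected_if_realisable_avoiding by blast

end
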